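(* Let $T$ be a permutation tableau. Then $\mathrm{inv}(T)=0$ if and only if $T$ is an L-Bell tableau.
   Context: Permutation tableaux. Draw a Ferrers diagram in English convention: rows are left-justified, row lengths weakly decrease from top to bottom, and every column is nonempty. Rows of length zero are allowed. A permutation tableau $T$ is a filling of the cells of such a diagram with 0's and 1's satisfying two conditions: (i) every column contains at least one 1; (ii) no cell containing 0 has both a 1 above it in its column and a 1 to its left in its row. Its length $n$ is the number of rows plus the number of columns. Labels. The southeast boundary path of $n$ unit south/west steps, from the top-right corner to the bottom-left corner, has its steps labeled $1,\ldots,n$ in order. Each row gets the label of its south step (at the right end of the row), and each column the label of its west step. $(i,j)$ denotes the cell in row $i$ and column $j$. Zeros, ones and rows. A 1 is topmost if there is no 1 above it in its column. A 0 is restricted if there is a 1 above it in its column. A rightmost restricted 0 is a restricted 0 with no restricted 0 to its right in its row. A row is unrestricted if it contains no restricted 0; empty rows are unrestricted. L-Bell tableau. A permutation tableau is an L-Bell tableau if every topmost 1 is also the leftmost 1 of its row, i.e. there is no 1 to its left in the same row. Dots. Black dots are placed on the topmost 1's (one per column), each labeled by its column label. White dots are placed on the rightmost restricted 0's (one per restricted row), each labeled by its row label. Alternating paths. An alternating path is a sequence of dots, identified with the sequence of their labels, built as follows. - From a white dot in cell $(i,j)$, the next dot is the black dot of column $j$. - From a black dot in cell $(i,j)$: if row $i$ is unrestricted, the path ends; otherwise the next dot is the white dot of row $i$. - If $k$ is a column label or the label of a restricted row, $P_k$ is the path starting at the dot labeled $k$. - If $r$ is the label of an unrestricted row, $P_r$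 is the empty path. $P_k$ is contained in a path $P$ if $k$ labels a dot of $P$. Empty paths are contained in no path. Order on paths. Let $P_a,P_b$ be two paths, neither contained in the other. Remove their longest common final segment, obtaining $P'_a,P'_b$. The ending position of $P'_a$ is defined as follows: - if $P'_a$ is nonempty, it is the cell of its last dot; - if $P_a$ is the empty path of an unrestricted row $r$, it is a point at the right end of row $r$, strictly to the right of all its cells. $P_a>P_b$ if the ending position of $P'_a$ is in a strictly lower row than that of $P'_b$, or in the same row and strictly to the right. Otherwise $P_a<P_b$. Inversions. An inversion is a pair $(j,k)$ of labels satisfying all of the following: $j$ is a column label; $j<k$; $k$ is not the label of a dot of $P_j$; and $P_j>P_k$. $\mathrm{inv}(T)$ is the number of inversions. *)

theory Defs
  imports Main
begin

text \<open>A tableau of length n is encoded by its length, the set of row labels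
(labels of the south steps of the boundary path; the remaining labels in
{1..n} are column labels), and the 0/1 filling (True = 1). Rows with larger labels are lower;
columns with larger labels are further to the left.\<close>

record ptab =
  len :: nat
  rowset :: "nat set"
  fill :: "nat \<Rightarrow> nat \<Rightarrow> bool"

definition cols :: "ptab \<Rightarrow> nat set" where
  "cols T = {1..len T} - rowset T"

definition is_cell :: "ptab \<Rightarrow> nat \<Rightarrow> nat \<Rightarrow> bool" where
  "is_cell T i j \<longleftrightarrow> i \<in> rowset T \<and> j \<in> cols T \<and> i < j"

definition perm_tableau :: "ptab \<Rightarrow> bool" where
  "perm_tableau T \<longleftrightarrow>
     rowset T \<subseteq> {1..len T}
   \<and> (\<forall>i j. fill T i j \<longrightarrow> is_cell T i j)
   \<and> (\<forall>j\<in>cols T. \<exists>i. is_cell T i j)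
   \<and> (\<forall>j\<in>cols T. \<exists>i. is_cell T i j \<and> fill T i j)
   \<and> (\<forall>i j. is_cell T i j \<and> \<not> fill T i j \<longrightarrow>
        \<not> ((\<exists>i'. is_cell T i' j \<and> i' < i \<and> fill T i' j)
           \<and> (\<exists>j'. is_cell T i j' \<and> j < j' \<and> fill T i j')))"

definition topmost_one :: "ptab \<Rightarrow> nat \<Rightarrow> nat \<Rightarrow> bool" where
  "topmost_one T i j \<longleftrightarrow> is_cell T i j \<and> fill T i j
     \<and> \<not> (\<exists>i'. is_cell T i' j \<and> i' < i \<and> fill T i' j)"

definition restricted_zero :: "ptab \<Rightarrow> nat \<Rightarrow> nat \<Rightarrow> bool" where
  "restricted_zero T i j \<longleftrightarrow> is_cell T i j \<and> \<not> fill T i j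
     \<and> (\<exists>i'. is_cell T i' j \<and> i' < i \<and> fill T i' j)"

definition restricted_row :: "ptab \<Rightarrow> nat \<Rightarrow> bool" where
  "restricted_row T i \<longleftrightarrow> i \<in> rowset T \<and> (\<exists>j. restricted_zero T i j)"

definition L_Bell :: "ptab \<Rightarrow> bool" where
  "L_Bell T \<longleftrightarrow> (\<forall>i j. topmost_one T i j \<longrightarrow>
      \<not> (\<exists>j'. is_cell T i j' \<and> j < j' \<and> fill T i j'))"

definition top_row :: "ptab \<Rightarrow> nat \<Rightarrow> nat" where
  "top_row T j = (LEAST i. topmost_one T i j)"

text \<open>Column of the white dot (rightmost restricted 0) of row i:
 rightmost = smallest column label.\<close>
definition white_col :: "ptab \<Rightarrow> nat \<Rightarrow> nat" where
  "white_col T i = (LEAST j. restricted_zero T i j)"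

definition dot_cell :: "ptab \<Rightarrow> nat \<Rightarrow> nat \<times> nat" where
  "dot_cell T k = (if k \<in> cols T then (top_row T k, k) else (k, white_col T k))"

definition next_dot :: "ptab \<Rightarrow> nat \<Rightarrow> nat option" where
  "next_dot T k = (if k \<in> cols T
       then (if restricted_row T (top_row T k) then Some (top_row T k) else None)
       else Some (white_col T k))"

fun walk :: "ptab \<Rightarrow> nat \<Rightarrow> nat \<Rightarrow> nat list" where
  "walk T 0 k = [k]"
| "walk T (Suc m) k = k # (case next_dot T k of None \<Rightarrow> [] | Some k' \<Rightarrow> walk T m k')"

text \<open>The alternating path P_k as the list of labels of its dots. Row labels
strictly decrease along a path, so its length is at most 2*(number of rows)+1,
and the fuel 2*len+1 is never exhausted.\<close>
definition path :: "ptab \<Rightarrow> nat \<Rightarrow> nat list" where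
  "path T k = (if k \<in> cols T \<or> restricted_row T k then walk T (2 * len T + 1) k else [])"

definition contained :: "ptab \<Rightarrow> nat \<Rightarrow> nat \<Rightarrow> bool" where
  "contained T a b \<longleftrightarrow> path T a \<noteq> [] \<and> a \<in> set (path T b)"

fun strip_common :: "nat list \<Rightarrow> nat list \<Rightarrow> nat list \<times> nat list" where
  "strip_common (x # xs) (y # ys) = (if x = y then strip_common xs ys else (x # xs, y # ys))"
| "strip_common xs ys = (xs, ys)"

text \<open>Ending position of P'_a (after removing the longest common final segment
with P_b), as (row, column label); the column value 0 encodes the point at the
right end of the row, strictly right of all its cells (column labels are >= 1,
and smaller labels are further right).\<close>
definition end_pos :: "ptab \<Rightarrow> nat \<Rightarrow> nat \<Rightarrow> nat \<times> nat" where
  "end_pos T a b =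
     (let P' = fst (strip_common (rev (path T a)) (rev (path T b)))
      in if P' = [] then (a, 0) else dot_cell T (hd P'))"

definition path_gt :: "ptab \<Rightarrow> nat \<Rightarrow> nat \<Rightarrow> bool" where
  "path_gt T a b \<longleftrightarrow> \<not> contained T a b \<and> \<not> contained T b a \<and>
     (fst (end_pos T a b) > fst (end_pos T b a)
      \<or> (fst (end_pos T a b) = fst (end_pos T b a) \<and> snd (end_pos T a b) < snd (end_pos T b a)))"

definition inversion :: "ptab \<Rightarrow> nat \<Rightarrow> nat \<Rightarrow> bool" where
  "inversion T j k \<longleftrightarrow> j \<in> cols T \<and> j < k \<and> k \<le> len T
     \<and> k \<notin> set (path T j) \<and> path_gt T j k"

definition tab_inv :: "ptab \<Rightarrow> nat" where
  "tab_inv T = card {(j, k). inversion T j k}"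

end

theory Submission
  imports Defs
begin

(* The heart of the argument is a comparison principle for
   alternating paths: if every row strictly above row B satisfies the L-Bell
   condition (its topmost 1's are leftmost 1's), then for two columns x < y whose
   black dots lie above B and with y not on P_x, the path P_y is greater than
   P_x.  It is proved by well-founded induction on the sum of the rows of the two
   black dots, following the paths through their white dots; the L-Bell
   condition forces every column to the left of x whose black dot is higher to
   carry a restricted 0 in the row of x's black dot.
   If T is L-Bell, the principle (with B below all rows) shows P_k > P_j for every
   column j and label k > j not on P_j, so there are no inversions.  If T is not
   L-Bell, take the topmost row i violating the condition, with black dot in
   column j and a further 1 in a column b > j; the principle applied to the rows
   above i shows that (j, b) is an inversion. *)

section \<open>Black and white dots\<close>

lemma cols_bounded: "j \<in> cols T \<Longrightarrow> 1 \<le> j \<and> j \<le> len T"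
  by (auto simp: cols_def)

lemma rows_bounded: "perm_tableau T \<Longrightarrow> r \<in> rowset T \<Longrightarrow> 1 \<le> r \<and> r \<le> len T"
  unfolding perm_tableau_def by auto

lemma col_not_row: "j \<in> cols T \<Longrightarrow> j \<notin> rowset T"
  by (auto simp: cols_def)

lemma cell_of_fill: "perm_tableau T \<Longrightarrow> fill T i j \<Longrightarrow> is_cell T i j"
  unfolding perm_tableau_def by blast

lemma topmost_one_top_row:
  assumes P: "perm_tableau T" and j: "j \<in> cols T"
  shows "topmost_one T (top_row T j) j"
proof -
  from P j have ex: "\<exists>i. is_cell T i j \<and> fill T i j" unfolding perm_tableau_def by blast
  define i0 where "i0 = (LEAST i. is_cell T i j \<and> fill T i j)"
  have one: "is_cell T i0 j \<and> fill T i0 j" unfolding i0_def by (rule LeastI_ex[OF ex])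
  have "\<not> (\<exists>i'. is_cell T i' j \<and> i' < i0 \<and> fill T i' j)"
    using not_less_Least i0_def by blast
  with one have "topmost_one T i0 j" by (simp add: topmost_one_def)
  then show ?thesis unfolding top_row_def by (rule LeastI)
qed

lemma top_row_eq:
  assumes P: "perm_tableau T" and j: "j \<in> cols T" and r: "topmost_one T r j"
  shows "top_row T j = r"
  using topmost_one_top_row[OF P j] r unfolding topmost_one_def by (metis linorder_neqE_nat)

lemma top_row_le_one:
  assumes P: "perm_tableau T" and f: "fill T r j"
  shows "top_row T j \<le> r"
proof -
  have c: "is_cell T r j" using cell_of_fill[OF P f] .
  then have "j \<in> cols T" by (simp add: is_cell_def)
  from topmost_one_top_row[OF P this] show ?thesis
    using c f unfolding topmost_one_def by (meson not_le)
qed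

lemma top_row_props:
  assumes P: "perm_tableau T" and j: "j \<in> cols T"
  shows "top_row T j < j" "top_row T j \<in> rowset T" "top_row T j \<notin> cols T"
        "fill T (top_row T j) j" "is_cell T (top_row T j) j"
  using topmost_one_top_row[OF P j] col_not_row unfolding topmost_one_def is_cell_def by auto

lemma restricted_zero_props:
  assumes P: "perm_tableau T" and z: "restricted_zero T r c"
  shows "c \<in> cols T" "r \<in> rowset T" "r < c" "top_row T c < r"
proof -
  show "c \<in> cols T" "r \<in> rowset T" "r < c"
    using z unfolding restricted_zero_def is_cell_def by auto
  from z obtain i' where "i' < r" "fill T i' c" unfolding restricted_zero_def by blast
  then show "top_row T c < r" using top_row_le_one[OF P] by (meson le_less_trans)
qed

lemma restricted_zero_left_of_ones:
  assumes P: "perm_tableau T" and z: "restricted_zero T r c" and f: "fill T r b"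
  shows "b < c"
proof -
  have "is_cell T r b" using cell_of_fill[OF P f] .
  moreover have "is_cell T r c \<and> \<not> fill T r c \<and> (\<exists>i'. is_cell T i' c \<and> i' < r \<and> fill T i' c)"
    using z unfolding restricted_zero_def by blast
  ultimately have "\<not> c < b" using P f unfolding perm_tableau_def by blast
  moreover have "b \<noteq> c" using z f unfolding restricted_zero_def by auto
  ultimately show ?thesis by simp
qed

lemma white_col_restricted_zero: "restricted_row T r \<Longrightarrow> restricted_zero T r (white_col T r)"
  unfolding restricted_row_def white_col_def by (meson LeastI)

lemma white_col_le: "restricted_zero T r c \<Longrightarrow> white_col T r \<le> c"
  unfolding white_col_def by (rule Least_le)

lemma restricted_row_not_col: "restricted_row T r \<Longrightarrow> r \<in> rowset T \<and> r \<notin> cols T"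
  unfolding restricted_row_def cols_def by auto

lemma white_dot_of_top_row:
  assumes P: "perm_tableau T" and c: "c \<in> cols T" and r: "restricted_row T (top_row T c)"
  defines "w \<equiv> white_col T (top_row T c)"
  shows "w \<in> cols T" "c < w" "top_row T w < top_row T c"
proof -
  have z: "restricted_zero T (top_row T c) w" using white_col_restricted_zero[OF r] w_def by simp
  show "w \<in> cols T" "top_row T w < top_row T c" using restricted_zero_props[OF P z] by auto
  show "c < w" using restricted_zero_left_of_ones[OF P z top_row_props(4)[OF P c]] .
qed

text \<open>Enough fuel to run a path to its end: the row labels strictly decrease
  along a path, and each row costs two steps.\<close>

definition fuel_ok :: "ptab \<Rightarrow> nat \<Rightarrow> nat \<Rightarrow> bool" where
  "fuel_ok T k m \<longleftrightarrow> (k \<in> cols T \<and> 2 * top_row T k < m) \<or> (restricted_row T k \<and> 2 * k \<le> m)"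

lemma walk_enough_fuel:
  assumes P: "perm_tableau T"
  shows "fuel_ok T k m \<Longrightarrow> walk T (Suc m) k = walk T m k"
proof (induction m arbitrary: k)
  case 0
  then have "restricted_row T k" "k = 0" unfolding fuel_ok_def by auto
  then show ?case using rows_bounded[OF P] restricted_row_not_col by (metis not_one_le_zero)
next
  case (Suc m)
  show ?case
  proof (cases "k \<in> cols T")
    case True
    then have lt: "2 * top_row T k < Suc m"
      using Suc.prems restricted_row_not_col unfolding fuel_ok_def by blast
    show ?thesis
    proof (cases "restricted_row T (top_row T k)")
      case True
      then have "fuel_ok T (top_row T k) m" using lt unfolding fuel_ok_def by simp
      then show ?thesis using Suc.IH True \<open>k \<in> cols T\<close> by (simp add: next_dot_def)
    qed (use \<open>k \<in> cols T\<close> in \<open>simp add: next_dot_def\<close>)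
  next
    case False
    then have r: "restricted_row T k" "2 * k \<le> Suc m" using Suc.prems unfolding fuel_ok_def by auto
    define w where "w = white_col T k"
    have z: "restricted_zero T k w" using white_col_restricted_zero[OF r(1)] w_def by simp
    then have "fuel_ok T w m" using restricted_zero_props[OF P z] r(2) unfolding fuel_ok_def by auto
    then show ?thesis using Suc.IH False by (simp add: next_dot_def w_def)
  qed
qed

lemma path_col_step:
  assumes P: "perm_tableau T" and c: "c \<in> cols T"
  shows "path T c = c # (if restricted_row T (top_row T c) then path T (top_row T c) else [])"
proof (cases "restricted_row T (top_row T c)")
  case True
  have "top_row T c \<le> len T" using rows_bounded[OF P top_row_props(2)[OF P c]] by simp
  then have "fuel_ok T (top_row T c) (2 * len T)" using True unfolding fuel_ok_def by simp
  then show ?thesis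
    using walk_enough_fuel[OF P] c True by (simp add: path_def next_dot_def)
qed (use c in \<open>simp add: path_def next_dot_def\<close>)

lemma path_row:
  assumes P: "perm_tableau T" and r: "restricted_row T r"
  shows "path T r = r # path T (white_col T r)"
proof -
  define w where "w = white_col T r"
  have z: "restricted_zero T r w" using white_col_restricted_zero[OF r] w_def by simp
  have w: "w \<in> cols T" "top_row T w < r" using restricted_zero_props[OF P z] by auto
  have "r \<le> len T" using rows_bounded[OF P] restricted_row_not_col[OF r] by simp
  then have "fuel_ok T w (2 * len T)" using w unfolding fuel_ok_def by simp
  then have "walk T (Suc (2 * len T)) w = walk T (2 * len T) w" by (rule walk_enough_fuel[OF P])
  then show ?thesis
    using restricted_row_not_col[OF r] r w(1) walk.simps(2)[of T "2 * len T" r]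
    by (simp add: path_def next_dot_def w_def)
qed

lemma path_col:
  assumes P: "perm_tableau T" and c: "c \<in> cols T"
  shows "path T c = c # (if restricted_row T (top_row T c)
     then top_row T c # path T (white_col T (top_row T c)) else [])"
  using path_col_step[OF P c] path_row[OF P] by simp

lemma path_col_hd:
  "perm_tableau T \<Longrightarrow> c \<in> cols T \<Longrightarrow> path T c \<noteq> [] \<and> hd (path T c) = c \<and> c \<in> set (path T c)"
  using path_col by simp

lemma col_path_labels:
  assumes P: "perm_tableau T"
  shows "c \<in> cols T \<Longrightarrow> z \<in> set (path T c) \<Longrightarrow>
     (z \<in> cols T \<longrightarrow> c \<le> z \<and> top_row T z \<le> top_row T c) \<and>
     (z \<notin> cols T \<longrightarrow> z \<le> top_row T c)"
proof (induction "top_row T c" arbitrary: c rule: less_induct)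
  case less
  show ?case
  proof (cases "restricted_row T (top_row T c)")
    case True
    define w where "w = white_col T (top_row T c)"
    have w: "w \<in> cols T" "c < w" "top_row T w < top_row T c"
      using white_dot_of_top_row[OF P less.prems(1) True] w_def by auto
    have "z = c \<or> z = top_row T c \<or> z \<in> set (path T w)"
      using less.prems(2) path_col[OF P less.prems(1)] True w_def by auto
    then show ?thesis
      using less.hyps[OF w(3) w(1)] w True less.prems(1) top_row_props(3)[OF P less.prems(1)]
      by force
  qed (use path_col[OF P less.prems(1)] less.prems in auto)
qed

lemma col_path_last:
  assumes P: "perm_tableau T"
  shows "c \<in> cols T \<Longrightarrow> last (path T c) \<in> cols T \<and>
      \<not> restricted_row T (top_row T (last (path T c)))"
proof (induction "top_row T c" arbitrary: c rule: less_induct)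
  case less
  show ?case
  proof (cases "restricted_row T (top_row T c)")
    case True
    define w where "w = white_col T (top_row T c)"
    have w: "w \<in> cols T" "top_row T w < top_row T c"
      using white_dot_of_top_row[OF P less.prems(1) True] w_def by auto
    have "path T c = c # top_row T c # path T w" using path_col[OF P less.prems(1)] True w_def by simp
    then show ?thesis using less.hyps[OF w(2) w(1)] path_col_hd[OF P w(1)] by simp
  qed (use path_col[OF P less.prems(1)] less.prems in auto)
qed

lemma col_path_last_props:
  assumes P: "perm_tableau T" and c: "c \<in> cols T"
  shows "last (path T c) \<in> cols T" "c \<le> last (path T c)"
    "top_row T (last (path T c)) \<le> top_row T c"
  using col_path_last[OF P c] col_path_labels[OF P c, of "last (path T c)"] path_col_hd[OF P c]
  by auto

lemma col_path_suffix:
  assumes P: "perm_tableau T"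
  shows "c \<in> cols T \<Longrightarrow> z \<in> set (path T c) \<Longrightarrow> z \<in> cols T \<Longrightarrow> z \<noteq> c \<Longrightarrow>
     \<exists>pre r. path T c = pre @ r # path T z \<and> r \<le> top_row T c \<and> r \<notin> cols T"
proof (induction "top_row T c" arbitrary: c rule: less_induct)
  case less
  show ?case
  proof (cases "restricted_row T (top_row T c)")
    case True
    define w where "w = white_col T (top_row T c)"
    have w: "w \<in> cols T" "top_row T w < top_row T c"
      using white_dot_of_top_row[OF P less.prems(1) True] w_def by auto
    have pc: "path T c = [c, top_row T c] @ path T w" using path_col[OF P less.prems(1)] True w_def by simp
    have tc: "top_row T c \<notin> cols T" using top_row_props(3)[OF P less.prems(1)] .
    show ?thesis
    proof (cases "z = w")
      case True
      then show ?thesis using pc tc by (intro exI[of _ "[c]"] exI[of _ "top_row T c"]) simp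
    next
      case False
      have "z \<in> set (path T w)" using less.prems pc tc by auto
      then obtain pre r where "path T w = pre @ r # path T z" "r \<le> top_row T w" "r \<notin> cols T"
        using less.hyps[OF w(2) w(1) _ less.prems(3) False] by blast
      then show ?thesis using pc w(2)
        by (intro exI[of _ "c # top_row T c # pre"] exI[of _ r]) simp
    qed
  qed (use path_col[OF P less.prems(1)] less.prems in auto)
qed

section \<open>Ending positions\<close>

lemma strip_common_swap: "strip_common B A = prod.swap (strip_common A B)"
proof (induction A arbitrary: B)
  case Nil then show ?case by (cases B) auto
next
  case (Cons x xs) then show ?case by (cases B) auto
qed

lemma strip_common_append: "fst (strip_common A B) \<noteq> [] \<Longrightarrow>
   strip_common (A @ C) B = (fst (strip_common A B) @ C, snd (strip_common A B))"
  by (induction A B rule: strip_common.induct) auto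

lemma strip_common_nonempty: "A \<noteq> [] \<Longrightarrow> last A \<notin> set B \<Longrightarrow> fst (strip_common A B) \<noteq> []"
proof (induction A B rule: strip_common.induct)
  case (1 x xs y ys)
  then show ?case by (cases "xs = []") auto
qed auto

lemma strip_common_prefix: "strip_common (C @ A) (C @ B) = strip_common A B"
  by (induction C) auto

lemma strip_common_distinct_hd: "A \<noteq> [] \<Longrightarrow> B \<noteq> [] \<Longrightarrow> hd A \<noteq> hd B \<Longrightarrow> strip_common A B = (A, B)"
  by (cases A; cases B) auto

lemma end_pos_transfer:
  assumes P: "perm_tableau T" and w: "w \<in> cols T"
    and pa: "path T a = pre @ path T w" and nin: "w \<notin> set (path T b)"
  shows "end_pos T a b = end_pos T w b" "end_pos T b a = end_pos T b w"
proof -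
  define A' where "A' = fst (strip_common (rev (path T w)) (rev (path T b)))"
  define B' where "B' = snd (strip_common (rev (path T w)) (rev (path T b)))"
  have "A' \<noteq> []"
    unfolding A'_def using path_col_hd[OF P w] nin by (intro strip_common_nonempty) (auto simp: last_rev)
  then have s: "strip_common (rev (path T a)) (rev (path T b)) = (A' @ rev pre, B')"
    using strip_common_append[of "rev (path T w)" "rev (path T b)" "rev pre"] pa A'_def B'_def by simp
  have s2: "strip_common (rev (path T w)) (rev (path T b)) = (A', B')" using A'_def B'_def by simp
  show "end_pos T a b = end_pos T w b" using s s2 \<open>A' \<noteq> []\<close> by (simp add: end_pos_def Let_def)
  have "strip_common (rev (path T b)) (rev (path T a)) = (B', A' @ rev pre)"
       "strip_common (rev (path T b)) (rev (path T w)) = (B', A')"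
    using s s2 strip_common_swap by (metis prod.swap_def fst_conv snd_conv)+
  then show "end_pos T b a = end_pos T b w" by (simp add: end_pos_def Let_def)
qed

lemma end_pos_distinct_last:
  assumes "path T a \<noteq> []" "path T b \<noteq> []" "last (path T a) \<noteq> last (path T b)"
  shows "end_pos T a b = dot_cell T (last (path T a))"
proof -
  have "strip_common (rev (path T a)) (rev (path T b)) = (rev (path T a), rev (path T b))"
    using assms by (intro strip_common_distinct_hd) (auto simp: hd_rev)
  then show ?thesis using assms by (simp add: end_pos_def Let_def hd_rev)
qed

lemma end_pos_empty_other:
  assumes "path T a \<noteq> []" "path T b = []"
  shows "end_pos T a b = dot_cell T (last (path T a))"
  using assms by (cases "rev (path T a)") (auto simp: end_pos_def Let_def hd_rev)

lemma end_pos_empty: "path T a = [] \<Longrightarrow> end_pos T a b = (a, 0)"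
  by (simp add: end_pos_def Let_def)

lemma end_pos_merge:
  assumes "path T a = pre @ Q" "path T b = pre' @ Q" "pre \<noteq> []" "pre' \<noteq> []" "last pre \<noteq> last pre'"
  shows "end_pos T a b = dot_cell T (last pre)"
proof -
  have "strip_common (rev (path T a)) (rev (path T b)) = strip_common (rev pre) (rev pre')"
    using assms(1,2) strip_common_prefix by simp
  also have "\<dots> = (rev pre, rev pre')" using assms(3-5) by (intro strip_common_distinct_hd) (auto simp: hd_rev)
  finally show ?thesis using assms(3) by (simp add: end_pos_def Let_def hd_rev)
qed

lemma dot_cell_col: "c \<in> cols T \<Longrightarrow> dot_cell T c = (top_row T c, c)"
  by (simp add: dot_cell_def)

lemma dot_cell_row: "r \<notin> cols T \<Longrightarrow> dot_cell T r = (r, white_col T r)"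
  by (simp add: dot_cell_def)

definition pos_gt :: "nat \<times> nat \<Rightarrow> nat \<times> nat \<Rightarrow> bool" where
  "pos_gt p q \<longleftrightarrow> fst q < fst p \<or> (fst p = fst q \<and> snd p < snd q)"

lemma pos_gt_asym: "pos_gt p q \<Longrightarrow> \<not> pos_gt q p"
  unfolding pos_gt_def by auto

lemma path_gt_iff: "path_gt T a b \<longleftrightarrow> \<not> contained T a b \<and> \<not> contained T b a \<and>
   pos_gt (end_pos T a b) (end_pos T b a)"
  unfolding path_gt_def pos_gt_def by auto

lemma pos_gt_merge_rows:
  assumes "path T a = pre @ r # Q" "path T b = pre' @ s # Q" "r \<notin> cols T" "s \<notin> cols T" "r < s"
  shows "pos_gt (end_pos T b a) (end_pos T a b)"
proof -
  have "end_pos T a b = dot_cell T r" "end_pos T b a = dot_cell T s"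
    using end_pos_merge[of T a "pre @ [r]" Q b "pre' @ [s]"]
      end_pos_merge[of T b "pre' @ [s]" Q a "pre @ [r]"] assms by auto
  then show ?thesis using assms(3-5) dot_cell_row by (simp add: pos_gt_def)
qed

lemma end_pos_single_dot:
  assumes P: "perm_tableau T" and x: "x \<in> cols T" "\<not> restricted_row T (top_row T x)"
    and y: "y \<in> cols T" "x \<notin> set (path T y)"
  shows "end_pos T x y = (top_row T x, x)"
    "end_pos T y x = (top_row T (last (path T y)), last (path T y))"
proof -
  have px: "path T x = [x]" using path_col[OF P x(1)] x(2) by simp
  have "last (path T y) \<noteq> x" using y(2) path_col_hd[OF P y(1)] by auto
  then show "end_pos T x y = (top_row T x, x)"
    "end_pos T y x = (top_row T (last (path T y)), last (path T y))"
    using end_pos_distinct_last[of T x y] end_pos_distinct_last[of T y x] px path_col_hd[OF P y(1)]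
      x(1) col_path_last_props(1)[OF P y(1)] dot_cell_col by auto
qed

section \<open>The comparison principle\<close>

definition LBell_above :: "ptab \<Rightarrow> nat \<Rightarrow> bool" where
  "LBell_above T B \<longleftrightarrow>
     (\<forall>r c b. r < B \<longrightarrow> topmost_one T r c \<longrightarrow> is_cell T r b \<longrightarrow> c < b \<longrightarrow> \<not> fill T r b)"

lemma LBell_above_restricted_zero:
  assumes P: "perm_tableau T" and g: "LBell_above T B" and x: "x \<in> cols T" "top_row T x < B"
    and c: "c \<in> cols T" "x < c" "top_row T c < top_row T x"
  shows "restricted_zero T (top_row T x) c"
proof -
  have cell: "is_cell T (top_row T x) c" using top_row_props[OF P x(1)] c unfolding is_cell_def by auto
  have "\<not> fill T (top_row T x) c"
    using g topmost_one_top_row[OF P x(1)] cell c(2) x(2) unfolding LBell_above_def by blast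
  then show ?thesis using cell top_row_props(4,5)[OF P c(1)] c(3) unfolding restricted_zero_def by blast
qed

lemma LBell_above_top_row_distinct:
  assumes P: "perm_tableau T" and g: "LBell_above T B" and x: "x \<in> cols T" "top_row T x < B"
    and y: "y \<in> cols T" "x < y"
  shows "top_row T y \<noteq> top_row T x"
proof
  assume e: "top_row T y = top_row T x"
  have "is_cell T (top_row T x) y" "fill T (top_row T x) y" using top_row_props[OF P y(1)] e by auto
  then show False using g topmost_one_top_row[OF P x(1)] y(2) x(2) unfolding LBell_above_def by blast
qed

lemma LBell_above_unrestricted:
  assumes P: "perm_tableau T" and g: "LBell_above T B" and x: "x \<in> cols T" "top_row T x < B"
    and u: "\<not> restricted_row T (top_row T x)" and c: "c \<in> cols T" "x < c"
  shows "top_row T x < top_row T c"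
proof -
  have "\<not> top_row T c < top_row T x"
    using LBell_above_restricted_zero[OF P g x c] u top_row_props(2)[OF P x(1)]
    unfolding restricted_row_def by blast
  then show ?thesis using LBell_above_top_row_distinct[OF P g x c] by simp
qed

lemma ordered_if_unrestricted_left:
  assumes P: "perm_tableau T" and g: "LBell_above T B"
    and x: "x \<in> cols T" "top_row T x < B" "\<not> restricted_row T (top_row T x)"
    and y: "y \<in> cols T" "x < y"
  shows "pos_gt (end_pos T y x) (end_pos T x y)"
proof -
  note ly = col_path_last_props[OF P y(1)]
  have "x \<notin> set (path T y)" using col_path_labels[OF P y(1)] x(1) y(2) by fastforce
  moreover have "top_row T x < top_row T (last (path T y))"
    using LBell_above_unrestricted[OF P g x(1,2,3)] ly y(2) by simp
  ultimately show ?thesis using end_pos_single_dot[OF P x(1,3) y(1)] by (simp add: pos_gt_def)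
qed

lemma ordered_if_unrestricted_lower:
  assumes P: "perm_tableau T" and x: "x \<in> cols T"
    and y: "y \<in> cols T" "\<not> restricted_row T (top_row T y)" "top_row T x < top_row T y"
    and ynin: "y \<notin> set (path T x)"
  shows "pos_gt (end_pos T y x) (end_pos T x y)"
proof -
  have "top_row T (last (path T x)) < top_row T y" using col_path_last_props(3)[OF P x] y(3) by simp
  then show ?thesis using end_pos_single_dot[OF P y(1,2) x ynin] by (simp add: pos_gt_def)
qed

lemma column_paths_ordered:
  assumes P: "perm_tableau T" and g: "LBell_above T B"
  shows "x \<in> cols T \<Longrightarrow> y \<in> cols T \<Longrightarrow> x < y \<Longrightarrow> top_row T x < B \<Longrightarrow> top_row T y < B
     \<Longrightarrow> y \<notin> set (path T x) \<Longrightarrow> pos_gt (end_pos T y x) (end_pos T x y)"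
proof (induction "top_row T x + top_row T y" arbitrary: x y rule: less_induct)
  case less
  note xc = less.prems(1) and yc = less.prems(2) and xy = less.prems(3)
    and xB = less.prems(4) and yB = less.prems(5) and ynin = less.prems(6)
  show ?case
  proof (cases "restricted_row T (top_row T x)")
    case False
    from ordered_if_unrestricted_left[OF P g xc xB False yc xy] show ?thesis .
  next
    case True
    define w where "w = white_col T (top_row T x)"
    have w: "w \<in> cols T" "x < w" "top_row T w < top_row T x"
      using white_dot_of_top_row[OF P xc True] w_def by auto
    have px: "path T x = [x, top_row T x] @ path T w" using path_col[OF P xc] True w_def by simp
    show ?thesis
    proof (cases "top_row T y < top_row T x")
      case True
      text \<open>y carries a restricted 0 in the row of x's black dot, so the white
        dot w of that row lies in a column right of y; continue with w and y.\<close>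
      have "w \<le> y" using LBell_above_restricted_zero[OF P g xc xB yc xy True] white_col_le w_def by simp
      moreover have "w \<noteq> y" using ynin px path_col_hd[OF P w(1)] by auto
      ultimately have wy: "w < y" by simp
      have "w \<notin> set (path T y)" using col_path_labels[OF P yc] wy w(1) by fastforce
      then show ?thesis
        using less.hyps[of w y] w True wy yc ynin px xB end_pos_transfer[OF P w(1) px] by auto
    next
      case False
      have txy: "top_row T x < top_row T y"
        using False LBell_above_top_row_distinct[OF P g xc xB yc xy] by simp
      show ?thesis
      proof (cases "restricted_row T (top_row T y)")
        case False
        from ordered_if_unrestricted_lower[OF P xc yc False txy ynin] show ?thesis .
      next
        case True
        text \<open>Follow y through its white dot w'; either P_x meets P_{w'} and the
          two paths merge below a higher row, or continue with x and w'.\<close>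
        define w' where "w' = white_col T (top_row T y)"
        have w': "w' \<in> cols T" "y < w'" "top_row T w' < top_row T y"
          using white_dot_of_top_row[OF P yc True] w'_def by auto
        have py: "path T y = [y, top_row T y] @ path T w'" using path_col[OF P yc] True w'_def by simp
        show ?thesis
        proof (cases "w' \<in> set (path T x)")
          case True
          obtain pre r where "path T x = pre @ r # path T w'" "r \<le> top_row T x" "r \<notin> cols T"
            using col_path_suffix[OF P xc True w'(1)] w'(2) xy by force
          then show ?thesis
            using pos_gt_merge_rows[of T x pre r "path T w'" y "[y]" "top_row T y"] py
              top_row_props(3)[OF P yc] txy by simp
        next
          case False
          then show ?thesis
            using less.hyps[of x w'] w' xy xc xB yB end_pos_transfer[OF P w'(1) py] by auto
        qed
      qed
    qed
  qed
qed

text \<open>The comparison principle for a column j and an arbitrary larger label k: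
  rows reduce to the column of their white dot, and the empty path of an
  unrestricted row ends below every dot of P_j.\<close>

lemma paths_ordered:
  assumes P: "perm_tableau T" and g: "LBell_above T B"
    and j: "j \<in> cols T" "j < k" "k \<notin> set (path T j)"
    and B: "\<And>c. c \<in> cols T \<Longrightarrow> top_row T c < B"
  shows "pos_gt (end_pos T k j) (end_pos T j k)"
proof -
  have tj: "top_row T j < j" using top_row_props(1)[OF P j(1)] .
  consider "k \<in> cols T" | "restricted_row T k" | "k \<notin> cols T" "\<not> restricted_row T k" by blast
  then show ?thesis
  proof cases
    case 1
    then show ?thesis using column_paths_ordered[OF P g j(1) 1 j(2) B[OF j(1)] B[OF 1] j(3)] j(1) by simp
  next
    case 2
    define w where "w = white_col T k"
    have z: "restricted_zero T k w" using white_col_restricted_zero[OF 2] w_def by simp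
    have w: "w \<in> cols T" "k < w" using restricted_zero_props[OF P z] by auto
    have pk: "path T k = [k] @ path T w" using path_row[OF P 2] w_def by simp
    show ?thesis
    proof (cases "w \<in> set (path T j)")
      case True
      obtain pre r where "path T j = pre @ r # path T w" "r \<le> top_row T j" "r \<notin> cols T"
        using col_path_suffix[OF P j(1) True w(1)] w(2) j(2) by force
      then show ?thesis
        using pos_gt_merge_rows[of T j pre r "path T w" k "[]" k] pk restricted_row_not_col[OF 2] tj j(2)
        by simp
    next
      case False
      then show ?thesis
        using column_paths_ordered[OF P g j(1) w(1) _ B[OF j(1)] B[OF w(1)] False] j(1,2) w(2) end_pos_transfer[OF P w(1) pk]
        by simp
    qed
  next
    case 3
    have "path T k = []" using 3 by (simp add: path_def)
    then show ?thesis
      using end_pos_empty end_pos_empty_other path_col_hd[OF P j(1)] col_path_last_props[OF P j(1)]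
        dot_cell_col tj j(2) by (simp add: pos_gt_def)
  qed
qed

lemma LBell_no_inversion:
  assumes P: "perm_tableau T" and L: "L_Bell T"
  shows "\<not> inversion T j k"
proof
  assume inv: "inversion T j k"
  have j: "j \<in> cols T" "j < k" "k \<notin> set (path T j)" "path_gt T j k"
    using inv unfolding inversion_def by auto
  have "LBell_above T (Suc (len T))" using L unfolding L_Bell_def LBell_above_def by blast
  moreover have "\<And>c. c \<in> cols T \<Longrightarrow> top_row T c < Suc (len T)"
    using rows_bounded[OF P] top_row_props(2)[OF P] by (meson le_imp_less_Suc)
  ultimately have "pos_gt (end_pos T k j) (end_pos T j k)" using paths_ordered[OF P _ j(1-3)] by blast
  then show False using j(4) pos_gt_asym path_gt_iff by blast
qed

lemma violation_paths_ordered: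
  assumes P: "perm_tableau T" and g: "LBell_above T i"
    and j: "j \<in> cols T" "top_row T j = i" and b: "b \<in> cols T" "j < b" "fill T i b"
    and bnj: "b \<notin> set (path T j)"
  shows "pos_gt (end_pos T j b) (end_pos T b j)"
proof (cases "top_row T b = i")
  case True
  define Q where "Q = (if restricted_row T i then i # path T (white_col T i) else [])"
  have pj: "path T j = [j] @ Q" using path_col[OF P j(1)] j(2) Q_def by simp
  have pb: "path T b = [b] @ Q" using path_col[OF P b(1)] True Q_def by simp
  have "end_pos T j b = dot_cell T j" "end_pos T b j = dot_cell T b"
    using end_pos_merge[OF pj pb] end_pos_merge[OF pb pj] b(2) by auto
  then show ?thesis using dot_cell_col j b True by (simp add: pos_gt_def)
next
  case False
  then have tbi: "top_row T b < i" using top_row_le_one[OF P b(3)] by simp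
  have jnb: "j \<notin> set (path T b)" using col_path_labels[OF P b(1)] j(1) b(2) by fastforce
  show ?thesis
  proof (cases "restricted_row T i")
    case False
    have "top_row T (last (path T b)) < i" using col_path_last_props(3)[OF P b(1)] tbi by simp
    then show ?thesis using end_pos_single_dot[OF P j(1) _ b(1) jnb] False j(2) by (simp add: pos_gt_def)
  next
    case True
    define w where "w = white_col T i"
    have z: "restricted_zero T i w" using white_col_restricted_zero[OF True] w_def by simp
    have w: "w \<in> cols T" "b < w" "top_row T w < i"
      using restricted_zero_props[OF P z] restricted_zero_left_of_ones[OF P z b(3)] by auto
    have pj: "path T j = [j, i] @ path T w" using path_col[OF P j(1)] j(2) True w_def by simp
    show ?thesis
    proof (cases "w \<in> set (path T b)")
      case True
      obtain pre r where "path T b = pre @ r # path T w" "r \<le> top_row T b" "r \<notin> cols T"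
        using col_path_suffix[OF P b(1) True w(1)] w(2) by force
      then show ?thesis
        using pos_gt_merge_rows[of T b pre r "path T w" j "[j]" i] pj
          top_row_props(3)[OF P j(1)] j(2) tbi by simp
    next
      case False
      then show ?thesis
        using column_paths_ordered[OF P g b(1) w(1) w(2) tbi w(3) False]
          end_pos_transfer[OF P w(1) pj] by simp
    qed
  qed
qed

lemma not_LBell_inversion:
  assumes P: "perm_tableau T" and L: "\<not> L_Bell T"
  shows "\<exists>j k. inversion T j k"
proof -
  define viol where "viol r \<longleftrightarrow> (\<exists>j b. topmost_one T r j \<and> is_cell T r b \<and> j < b \<and> fill T r b)" for r
  have ex: "\<exists>r. viol r" using L unfolding L_Bell_def viol_def by blast
  define i where "i = (LEAST r. viol r)"
  have g: "LBell_above T i" unfolding LBell_above_def using not_less_Least[of _ viol] i_def viol_def by blast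
  obtain j b where jb: "topmost_one T i j" "is_cell T i b" "j < b" "fill T i b"
    using LeastI_ex[OF ex] i_def viol_def by blast
  have jc: "j \<in> cols T" and bc: "b \<in> cols T" using jb(1,2) unfolding topmost_one_def is_cell_def by auto
  have tj: "top_row T j = i" using top_row_eq[OF P jc jb(1)] .
  have jnb: "j \<notin> set (path T b)" using col_path_labels[OF P bc] jc jb(3) by fastforce
  have bnj: "b \<notin> set (path T j)"
  proof (cases "restricted_row T i")
    case True
    define w where "w = white_col T i"
    have z: "restricted_zero T i w" using white_col_restricted_zero[OF True] w_def by simp
    have w: "w \<in> cols T" "b < w"
      using restricted_zero_props[OF P z] restricted_zero_left_of_ones[OF P z jb(4)] by auto
    have "path T j = j # i # path T w" using path_col[OF P jc] tj True w_def by simp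
    then show ?thesis using col_path_labels[OF P w(1)] w jb(3) top_row_props(3)[OF P jc] tj bc
      by fastforce
  qed (use path_col[OF P jc] tj jb(3) in simp)
  have "pos_gt (end_pos T j b) (end_pos T b j)"
    using violation_paths_ordered[OF P g jc tj bc jb(3,4) bnj] .
  then have "inversion T j b"
    unfolding inversion_def path_gt_iff contained_def
    using jc jb(3) bnj jnb cols_bounded[OF bc] by simp
  then show ?thesis by blast
qed

theorem theorem3p4:
  assumes "perm_tableau T"
  shows "tab_inv T = 0 \<longleftrightarrow> L_Bell T"
proof -
  have "{(j, k). inversion T j k} \<subseteq> {..len T} \<times> {..len T}"
    using cols_bounded unfolding inversion_def by fastforce
  then have fin: "finite {(j, k). inversion T j k}" by (rule finite_subset) simp
  have "tab_inv T = 0 \<longleftrightarrow> {(j, k). inversion T j k} = {}"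
    unfolding tab_inv_def using fin by simp
  also have "\<dots> \<longleftrightarrow> L_Bell T"
    using LBell_no_inversion[OF assms] not_LBell_inversion[OF assms] by blast
  finally show ?thesis .
qed

end
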